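(* Let $C>1$ be a constant such that for every real $Z>0$ and every cubic field $K$ with $|\Delta(K)|\le Z$, the set $S_K(CZ^{1/4})$ is nonempty. Let $X,Y>0$ be real numbers with $Y\geq CX^{1/4}$, and let $K$ be a cubic field with $X/2\leq|\Delta(K)|\leq X$. Then \[ \#S_K(Y)/\#S_K(CX^{1/4})\ll Y^2/X^{1/2}, \] where the implied constant is independent of $X$, $Y$, and $K$.
   Context: For a cubic field $K$ with ring of integers $\mathcal{O}_K$ and discriminant $\Delta(K)$, an element $\alpha\in\mathcal{O}_K$ is reduced if its trace lies in $\{-1,0,1\}$; $|\alpha|_\infty=\max_{v\mid\infty}|\alpha|_v$ (maximum of $|\tau(\alpha)|$ over complex embeddings $\tau$); for $Y>0$, $S_K(Y)$ is the set of reduced $\alpha\in\mathcal{O}_K\setminus\mathbb{Z}$ with $|\alpha|_\infty<Y$. *)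

theory Defs
  imports "HOL-Analysis.Analysis" "HOL-Computational_Algebra.Computational_Algebra"
begin

text \<open>Cubic fields are represented concretely as subfields of the complex numbers
  (every cubic field embeds in the complex numbers):
  K = Q(theta) where theta is a root of an irreducible cubic over Q.\<close>

definition cubic_field :: "complex set \<Rightarrow> bool" where
  "cubic_field K \<longleftrightarrow> (\<exists>(f::rat poly) \<theta>. degree f = 3 \<and> irreducible f \<and>
       poly (map_poly of_rat f) \<theta> = 0 \<and>
       K = {poly (map_poly of_rat q) \<theta> | q. True})"

definition embeddings :: "complex set \<Rightarrow> (complex \<Rightarrow> complex) set" where
  "embeddings K = {\<sigma>. \<sigma> 1 = 1 \<and>
      (\<forall>x\<in>K. \<forall>y\<in>K. \<sigma> (x + y) = \<sigma> x + \<sigma> y \<and> \<sigma> (x * y) = \<sigma> x * \<sigma> y) \<and>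
      (\<forall>x. x \<notin> K \<longrightarrow> \<sigma> x = 0)}"

definition trace :: "complex set \<Rightarrow> complex \<Rightarrow> complex" where
  "trace K \<alpha> = (\<Sum>\<sigma>\<in>embeddings K. \<sigma> \<alpha>)"

definition abs_inf :: "complex set \<Rightarrow> complex \<Rightarrow> real" where
  "abs_inf K \<alpha> = Max ((\<lambda>\<sigma>. cmod (\<sigma> \<alpha>)) ` embeddings K)"

definition algebraic_int :: "complex \<Rightarrow> bool" where
  "algebraic_int x \<longleftrightarrow> (\<exists>p::int poly. lead_coeff p = 1 \<and> poly (map_poly of_int p) x = 0)"

definition ring_of_integers :: "complex set \<Rightarrow> complex set" where
  "ring_of_integers K = {\<alpha>\<in>K. algebraic_int \<alpha>}"

definition integral_basis :: "complex set \<Rightarrow> (nat \<Rightarrow> complex) \<Rightarrow> bool" where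
  "integral_basis K \<omega> \<longleftrightarrow> (\<forall>i<3. \<omega> i \<in> ring_of_integers K) \<and>
     (\<forall>\<alpha>\<in>ring_of_integers K. \<exists>!n::nat \<Rightarrow> int. (\<forall>i\<ge>3. n i = 0) \<and>
         \<alpha> = (\<Sum>i<3. of_int (n i) * \<omega> i))"

definition det3 :: "(nat \<Rightarrow> nat \<Rightarrow> complex) \<Rightarrow> complex" where
  "det3 M = M 0 0 * (M 1 1 * M 2 2 - M 1 2 * M 2 1)
          - M 0 1 * (M 1 0 * M 2 2 - M 1 2 * M 2 0)
          + M 0 2 * (M 1 0 * M 2 1 - M 1 1 * M 2 0)"

text \<open>Discriminant: det(Tr(omega_i omega_j)) for an integral basis (independent of the basis).\<close>
definition disc :: "complex set \<Rightarrow> complex" where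
  "disc K = (let \<omega> = (SOME \<omega>. integral_basis K \<omega>) in
              det3 (\<lambda>i j. trace K (\<omega> i * \<omega> j)))"

definition S :: "complex set \<Rightarrow> real \<Rightarrow> complex set" where
  "S K Y = {\<alpha>\<in>ring_of_integers K. trace K \<alpha> \<in> {-1, 0, 1} \<and> \<alpha> \<notin> \<int> \<and> abs_inf K \<alpha> < Y}"

end

theory Submission
  imports Defs "Jordan_Normal_Form.Char_Poly"
begin

(* Split S_K(Y) according to the trace t \<in> {-1, 0, 1}.  Two elements of one class differ by a
   trace-zero element of O_K, and a trace-zero element a + b\<theta> + c\<theta>\<^sup>2 is determined by (b, c);
   on such differences |.|_\<infinity> is a seminorm in (b, c).  Choose a maximal subset of the class whose
   points are pairwise at distance \<ge> T = C X^(1/4).  A volume argument in the (b, c)-plane bounds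
   its size by 36 (Y/T)\<^sup>2, and each point of the class lies within distance T of one of its points,
   so the difference is 0 or an element of S_K(T).  Hence #S_K(Y) \<le> 108 (Y/T)\<^sup>2 (#S_K(T) + 1),
   and the hypothesis S_K(T) \<noteq> {} turns this into the claimed ratio bound. *)

section \<open>Algebraic integers are closed under subtraction\<close>

definition int_span :: "'i set \<Rightarrow> ('i \<Rightarrow> 'a::comm_ring_1) \<Rightarrow> 'a set" where
  "int_span I g = {(\<Sum>i\<in>I. of_int (c i) * g i) | c. True}"

lemma int_spanI: "v = (\<Sum>i\<in>I. of_int (c i) * g i) \<Longrightarrow> v \<in> int_span I g"
  unfolding int_span_def by blast

lemma int_spanE:
  assumes "v \<in> int_span I g"
  obtains c where "v = (\<Sum>i\<in>I. of_int (c i) * g i)"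
  using assms unfolding int_span_def by blast

lemma int_span_add:
  assumes "v \<in> int_span I g" "w \<in> int_span I g"
  shows "v + w \<in> int_span I g"
proof -
  obtain c d where "v = (\<Sum>i\<in>I. of_int (c i) * g i)" "w = (\<Sum>i\<in>I. of_int (d i) * g i)"
    using assms by (blast elim: int_spanE)
  then have "v + w = (\<Sum>i\<in>I. of_int (c i + d i) * g i)"
    by (simp add: sum.distrib[symmetric] distrib_right)
  then show ?thesis by (rule int_spanI)
qed

lemma int_span_of_int_mult:
  assumes "v \<in> int_span I g"
  shows "of_int k * v \<in> int_span I g"
proof -
  obtain c where "v = (\<Sum>i\<in>I. of_int (c i) * g i)"
    using assms by (rule int_spanE)
  then have "of_int k * v = (\<Sum>i\<in>I. of_int (k * c i) * g i)"
    by (simp add: sum_distrib_left mult.assoc)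
  then show ?thesis by (rule int_spanI)
qed

lemma int_span_mult_right:
  assumes "v \<in> int_span I g"
  shows "v * u \<in> int_span I (\<lambda>i. g i * u)"
proof -
  obtain c where "v = (\<Sum>i\<in>I. of_int (c i) * g i)"
    using assms by (rule int_spanE)
  then have "v * u = (\<Sum>i\<in>I. of_int (c i) * (g i * u))"
    by (simp add: sum_distrib_right mult.assoc)
  then show ?thesis by (rule int_spanI)
qed

lemma int_span_sum:
  assumes "finite A" "\<And>a. a \<in> A \<Longrightarrow> f a \<in> int_span I g"
  shows "sum f A \<in> int_span I g"
  using assms
proof (induction A rule: finite_induct)
  case empty
  show ?case by (rule int_spanI[where c = "\<lambda>_. 0"]) simp
qed (simp add: int_span_add)

lemma int_span_generator:
  assumes "finite I" "i \<in> I"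
  shows "g i \<in> int_span I g"
proof -
  have "(\<Sum>j\<in>I. of_int (of_bool (j = i)) * g j) = (\<Sum>j\<in>I. if j = i then g j else 0)"
    by (intro sum.cong) auto
  also have "\<dots> = g i" using assms by simp
  finally show ?thesis by (rule int_spanI[OF sym])
qed

lemma int_span_subset:
  assumes "finite J" "\<And>j. j \<in> J \<Longrightarrow> h j \<in> int_span I g"
  shows "int_span J h \<subseteq> int_span I g"
  unfolding int_span_def [of J h]
  using assms by (auto intro!: int_span_sum int_span_of_int_mult)

lemma algebraic_int_if_int_span_stable:
  fixes z :: complex
  assumes "finite I" "i\<^sub>0 \<in> I" "g i\<^sub>0 \<noteq> 0" "\<And>i. i \<in> I \<Longrightarrow> z * g i \<in> int_span I g"
  shows "algebraic_int z"
proof -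
  define N where "N = card I"
  obtain e where e: "bij_betw e {..<N} I"
    using ex_bij_betw_nat_finite[OF assms(1)] unfolding N_def atLeast0LessThan by blast
  define h where "h = g \<circ> e"
  have "int_span I g \<subseteq> int_span {..<N} h"
  proof (rule int_span_subset[OF assms(1)])
    fix i assume "i \<in> I"
    then obtain s where "s < N" "i = e s" using e by (auto simp: bij_betw_def)
    then show "g i \<in> int_span {..<N} h"
      using int_span_generator[of "{..<N}" s h] unfolding h_def by simp
  qed
  then have "z * h s \<in> int_span {..<N} h" if "s < N" for s
    using assms(4)[of "e s"] e that unfolding h_def by (auto simp: bij_betw_def)
  then have "\<forall>s<N. \<exists>c. z * h s = (\<Sum>t<N. of_int (c t) * h t)"
    unfolding int_span_def by blast
  \<comment> \<open>z is an eigenvalue of the integer matrix of multiplication by z on the family h,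
    hence a root of its monic characteristic polynomial.\<close>
  then obtain c where c: "\<And>s. s < N \<Longrightarrow> z * h s = (\<Sum>t<N. of_int (c s t) * h t)"
    by metis
  define A :: "int mat" where "A = mat N N (\<lambda>(s, t). c s t)"
  define v :: "complex vec" where "v = vec N h"
  have A: "A \<in> carrier_mat N N" unfolding A_def by simp
  have "of_int_hom.mat_hom A *\<^sub>v v = z \<cdot>\<^sub>v v"
  proof (rule eq_vecI)
    fix s assume "s < dim_vec (z \<cdot>\<^sub>v v)"
    then have s: "s < N" unfolding v_def by simp
    have "vec_index (of_int_hom.mat_hom A *\<^sub>v v) s = (\<Sum>t<N. of_int (c s t) * h t)"
      using s unfolding A_def v_def by (simp add: mult_mat_vec_def scalar_prod_def atLeast0LessThan)
    then show "vec_index (of_int_hom.mat_hom A *\<^sub>v v) s = vec_index (z \<cdot>\<^sub>v v) s"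
      using c[OF s] s unfolding v_def by simp
  qed (simp add: A_def v_def)
  moreover have "v \<noteq> 0\<^sub>v N"
  proof -
    obtain s where "s < N" "e s = i\<^sub>0" using e assms(2) by (auto simp: bij_betw_def)
    then have "vec_index v s \<noteq> 0" using assms(3) unfolding v_def h_def by simp
    then show ?thesis using \<open>s < N\<close> by auto
  qed
  ultimately have "eigenvalue (of_int_hom.mat_hom A) z"
    using A unfolding eigenvalue_def eigenvector_def by (auto intro!: exI[of _ v] simp: v_def)
  then have "poly (of_int_poly (char_poly A)) z = 0"
    using A by (simp add: eigenvalue_root_char_poly of_int_hom.char_poly_hom[symmetric])
  moreover have "lead_coeff (char_poly A) = 1" using degree_monic_char_poly[OF A] by simp
  ultimately show ?thesis unfolding algebraic_int_def by blast
qed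

lemma monic_root_power_in_int_span:
  fixes p :: "int poly" and x :: "'a::{comm_ring_1, ring_char_0}"
  assumes "lead_coeff p = 1" "poly (of_int_poly p) x = 0"
  shows "x ^ degree p \<in> int_span {..<degree p} (\<lambda>l. x ^ l)"
proof (rule int_spanI)
  have "0 = (\<Sum>i\<le>degree p. of_int (coeff p i) * x ^ i)"
    using assms(2) unfolding poly_altdef by simp
  also have "\<dots> = (\<Sum>i<degree p. of_int (coeff p i) * x ^ i) + x ^ degree p"
    using assms(1) by (simp add: lessThan_Suc_atMost[symmetric])
  finally show "x ^ degree p = (\<Sum>l<degree p. of_int (- coeff p l) * x ^ l)"
    by (simp add: sum_negf eq_neg_iff_add_eq_0 add.commute)
qed

lemma monic_root_degree_pos:
  fixes p :: "int poly" and x :: "'a::comm_ring_1"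
  assumes "lead_coeff p = 1" "poly (of_int_poly p) x = 0"
  shows "degree p > 0"
proof (rule ccontr)
  assume "\<not> degree p > 0"
  then have "p = [:1:]" using assms(1) by (metis degree_0_id gr0I)
  then show False using assms(2) by simp
qed

lemma mult_power_in_int_span:
  assumes "x ^ m \<in> int_span {..<m} (\<lambda>l. x ^ l)" "i < m"
  shows "x * x ^ i \<in> int_span {..<m} (\<lambda>l. x ^ l)"
proof (cases "Suc i < m")
  case True
  then show ?thesis using int_span_generator[of "{..<m}" "Suc i" "\<lambda>l. x ^ l"] by simp
next
  case False
  then have "Suc i = m" using assms(2) by simp
  then show ?thesis using assms(1) by auto
qed

lemma algebraic_int_add:
  assumes "algebraic_int x" "algebraic_int y"
  shows "algebraic_int (x + y)"
proof -
  obtain p where p: "lead_coeff p = 1" "poly (of_int_poly p) x = 0"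
    using assms(1) unfolding algebraic_int_def by blast
  obtain q where q: "lead_coeff q = 1" "poly (of_int_poly q) y = 0"
    using assms(2) unfolding algebraic_int_def by blast
  define m n where "m = degree p" and "n = degree q"
  define I where "I = {..<m} \<times> {..<n}"
  define g where "g = (\<lambda>(i, j). x ^ i * y ^ j)"
  have gen: "x ^ i * y ^ j \<in> int_span I g" if "i < m" "j < n" for i j
    using int_span_generator[of I "(i, j)" g] that unfolding I_def g_def by simp
  have x_stable: "x * (x ^ i * y ^ j) \<in> int_span I g" if "i < m" "j < n" for i j
  proof -
    have "x * x ^ i \<in> int_span {..<m} (\<lambda>l. x ^ l)"
      using mult_power_in_int_span monic_root_power_in_int_span[OF p] that unfolding m_def by blast
    then have "x * x ^ i * y ^ j \<in> int_span {..<m} (\<lambda>l. x ^ l * y ^ j)"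
      by (rule int_span_mult_right)
    also have "\<dots> \<subseteq> int_span I g" using gen that by (intro int_span_subset) auto
    finally show ?thesis by (simp add: mult.assoc)
  qed
  have y_stable: "y * (x ^ i * y ^ j) \<in> int_span I g" if "i < m" "j < n" for i j
  proof -
    have "y * y ^ j \<in> int_span {..<n} (\<lambda>l. y ^ l)"
      using mult_power_in_int_span monic_root_power_in_int_span[OF q] that unfolding n_def by blast
    then have "y * y ^ j * x ^ i \<in> int_span {..<n} (\<lambda>l. y ^ l * x ^ i)"
      by (rule int_span_mult_right)
    also have "\<dots> \<subseteq> int_span I g" using gen that by (intro int_span_subset) (auto simp: mult.commute)
    finally show ?thesis by (simp add: algebra_simps)
  qed
  show ?thesis
  proof (rule algebraic_int_if_int_span_stable)
    show "finite I" "(0, 0) \<in> I" "g (0, 0) \<noteq> 0"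
      using monic_root_degree_pos[OF p] monic_root_degree_pos[OF q]
      unfolding I_def g_def m_def n_def by auto
    fix ij assume "ij \<in> I"
    then show "(x + y) * g ij \<in> int_span I g"
      using x_stable y_stable unfolding I_def g_def by (auto simp: distrib_right intro!: int_span_add)
  qed
qed

lemma algebraic_int_eq_library: "algebraic_int x \<longleftrightarrow> Polynomial.algebraic_int x"
  unfolding algebraic_int_def algebraic_int_altdef_ipoly by auto

lemma algebraic_int_diff:
  assumes "algebraic_int x" "algebraic_int y"
  shows "algebraic_int (x - y)"
  using algebraic_int_add[of x "- y"] assms unfolding algebraic_int_eq_library by simp

section \<open>Packing in a seminormed space\<close>

lemma gauge_ball_eq_affine_image:
  fixes H :: "'a::real_vector \<Rightarrow> real"
  assumes homog: "\<And>r z. H (r *\<^sub>R z) = \<bar>r\<bar> * H z" and r: "r > 0"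
  shows "{z. H (z - v) < r} = (\<lambda>x. r *\<^sub>R x + v) ` {z. H z < 1}"
proof (rule Set.set_eqI, rule iffI)
  fix z assume "z \<in> {z. H (z - v) < r}"
  moreover have "H ((1 / r) *\<^sub>R (z - v)) = H (z - v) / r"
    using r by (simp only: homog) simp
  ultimately have "H ((1 / r) *\<^sub>R (z - v)) < 1"
    using r by simp
  moreover have "z = r *\<^sub>R ((1 / r) *\<^sub>R (z - v)) + v" using r by simp
  ultimately show "z \<in> (\<lambda>x. r *\<^sub>R x + v) ` {z. H z < 1}" by blast
next
  fix z assume "z \<in> (\<lambda>x. r *\<^sub>R x + v) ` {z. H z < 1}"
  then show "z \<in> {z. H (z - v) < r}" using r by (auto simp: homog)
qed

lemma emeasure_gauge_ball:
  fixes H :: "'a::euclidean_space \<Rightarrow> real"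
  assumes cont: "continuous_on UNIV H"
    and homog: "\<And>r z. H (r *\<^sub>R z) = \<bar>r\<bar> * H z" and r: "r > 0"
  shows "emeasure lborel {z. H (z - v) < r} = ennreal (r ^ DIM('a)) * emeasure lborel {z. H z < 1}"
proof -
  have "open {z. H (z - v) < r}" for v r
    by (intro open_Collect_less continuous_on_compose2[OF cont] continuous_intros) auto
  from borel_open[OF this[of v r]] borel_open[OF this[of 0 1]]
  have sets: "{z. H (z - v) < r} \<in> sets borel" "{z. H z < 1} \<in> sets borel"
    by simp_all
  have "emeasure lebesgue ((\<lambda>x. r *\<^sub>R x + v) ` {z. H z < 1})
      = ennreal (\<bar>r\<bar> ^ DIM('a)) * emeasure lebesgue {z. H z < 1}"
    by (rule emeasure_lebesgue_affine)
  then show ?thesis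
    using sets r unfolding gauge_ball_eq_affine_image[OF homog r, symmetric] by simp
qed

lemma emeasure_gauge_unit_ball_pos_finite:
  fixes H :: "'a::euclidean_space \<Rightarrow> real"
  assumes cont: "continuous_on UNIV H"
    and homog: "\<And>r z. H (r *\<^sub>R z) = \<bar>r\<bar> * H z"
    and coercive: "\<And>z. e * norm z \<le> H z" and e: "e > 0"
  shows "0 < emeasure lborel {z. H z < 1}" "emeasure lborel {z. H z < 1} < \<infinity>"
proof -
  define U where "U = {z. H z < 1}"
  have "open U" unfolding U_def
    by (intro open_Collect_less cont continuous_on_const)
  moreover have "0 \<in> U" using homog[of 0 0] unfolding U_def by simp
  ultimately obtain d where d: "d > 0" "ball 0 d \<subseteq> U" using open_contains_ball by blast
  have "0 < emeasure lborel (ball (0::'a) d)" using d(1) by (simp add: emeasure_ball)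
  also have "\<dots> \<le> emeasure lborel U"
    using d(2) \<open>open U\<close> by (intro emeasure_mono) auto
  finally show "0 < emeasure lborel {z. H z < 1}" unfolding U_def .
  have "U \<subseteq> cball 0 (1 / e)"
  proof
    fix z assume "z \<in> U"
    then have "e * norm z < 1" using coercive[of z] unfolding U_def by simp
    then show "z \<in> cball 0 (1 / e)" using e by (simp add: field_simps)
  qed
  then have "bounded U" using bounded_cball bounded_subset by blast
  then show "emeasure lborel {z. H z < 1} < \<infinity>"
    unfolding U_def by (rule emeasure_bounded_finite)
qed

lemma card_separated_in_coercive_gauge_ball:
  fixes H :: "'a::euclidean_space \<Rightarrow> real"
  assumes cont: "continuous_on UNIV H"
    and subadd: "\<And>z w. H (z + w) \<le> H z + H w"
    and homog: "\<And>r z. H (r *\<^sub>R z) = \<bar>r\<bar> * H z"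
    and coercive: "\<And>z. e * norm z \<le> H z" and e: "e > 0"
    and Q: "finite Q" and T: "T > 0" and R: "R \<ge> 0"
    and bounded: "\<And>q. q \<in> Q \<Longrightarrow> H (q - c) < R"
    and separated: "\<And>q q'. q \<in> Q \<Longrightarrow> q' \<in> Q \<Longrightarrow> q \<noteq> q' \<Longrightarrow> T \<le> H (q - q')"
  shows "real (card Q) * T ^ DIM('a) \<le> (2 * R + T) ^ DIM('a)"
proof -
  obtain m where m: "emeasure lborel {z. H z < 1} = ennreal m" "m > 0"
    using emeasure_gauge_unit_ball_pos_finite[OF cont homog coercive e]
    by (metis ennreal_cases ennreal_less_zero_iff infinity_ennreal_def less_irrefl)
  have ball_measure: "emeasure lborel {z. H (z - v) < r} = ennreal (r ^ DIM('a) * m)" if "r > 0" for v r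
    using emeasure_gauge_ball[OF cont homog that] that m by (simp add: ennreal_mult')
  have ball_sets: "{z. H (z - v) < r} \<in> sets lborel" for v r
    unfolding sets_lborel
    by (intro borel_open open_Collect_less continuous_on_compose2[OF cont] continuous_intros) auto
  define A where "A q = {z. H (z - q) < T / 2}" for q
  have A_sets: "A q \<in> sets lborel" for q
    unfolding A_def by (rule ball_sets)
  have A_measure: "emeasure lborel (A q) = ennreal ((T / 2) ^ DIM('a) * m)" for q
    unfolding A_def using T by (intro ball_measure) simp
  have "disjoint_family_on A Q"
    unfolding disjoint_family_on_def
  proof (intro ballI impI)
    fix q q' assume q: "q \<in> Q" "q' \<in> Q" "q \<noteq> q'"
    have "z \<notin> A q \<inter> A q'" for z
    proof
      assume "z \<in> A q \<inter> A q'"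
      then have "H (z - q) < T / 2" "H (z - q') < T / 2" unfolding A_def by auto
      moreover have "H (q - q') \<le> H (z - q) + H (z - q')"
        using subadd[of "q - z" "z - q'"] homog[of "- 1" "z - q"] by simp
      ultimately show False using separated[OF q] by linarith
    qed
    then show "A q \<inter> A q' = {}" by blast
  qed
  moreover have "(\<Union>q\<in>Q. A q) \<subseteq> {z. H (z - c) < R + T / 2}"
  proof safe
    fix q z assume q: "q \<in> Q" and z: "z \<in> A q"
    have "H (z - c) \<le> H (z - q) + H (q - c)" using subadd[of "z - q" "q - c"] by simp
    then show "H (z - c) < R + T / 2" using z bounded[OF q] unfolding A_def by simp
  qed
  ultimately have "(\<Sum>q\<in>Q. emeasure lborel (A q)) \<le> emeasure lborel {z. H (z - c) < R + T / 2}"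
    using A_sets ball_sets Q by (subst sum_emeasure) (auto intro!: emeasure_mono)
  then have "ennreal (real (card Q) * ((T / 2) ^ DIM('a) * m)) \<le> ennreal ((R + T / 2) ^ DIM('a) * m)"
    using T R by (simp add: A_measure ball_measure ennreal_of_nat_eq_real_of_nat ennreal_mult')
  then have "real (card Q) * (T / 2) ^ DIM('a) \<le> ((2 * R + T) / 2) ^ DIM('a)"
    using m(2) T R by (subst (asm) ennreal_le_iff) (auto simp: add_divide_distrib)
  then show ?thesis by (simp add: power_divide divide_le_eq)
qed

lemma card_separated_in_gauge_ball:
  fixes G :: "'a::euclidean_space \<Rightarrow> real"
  assumes cont: "continuous_on UNIV G"
    and subadd: "\<And>z w. G (z + w) \<le> G z + G w"
    and homog: "\<And>r z. G (r *\<^sub>R z) = \<bar>r\<bar> * G z"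
    and Q: "finite Q" and T: "T > 0" and R: "R \<ge> 0"
    and bounded: "\<And>q. q \<in> Q \<Longrightarrow> G (q - c) < R"
    and separated: "\<And>q q'. q \<in> Q \<Longrightarrow> q' \<in> Q \<Longrightarrow> q \<noteq> q' \<Longrightarrow> T \<le> G (q - q')"
  shows "real (card Q) * T ^ DIM('a) \<le> (2 * (R + T)) ^ DIM('a)"
proof -
  have G_nonneg: "G z \<ge> 0" for z
    using subadd[of z "- z"] homog[of 0 0] homog[of "- 1" z] by simp
  define B where "B = Max (insert 0 ((\<lambda>q. norm (q - c)) ` Q)) + 1"
  have Max_ge_norm: "norm (q - c) \<le> Max (insert 0 ((\<lambda>q. norm (q - c)) ` Q))" if "q \<in> Q" for q
    using Q that by (intro Max_ge) auto
  have "0 \<le> Max (insert 0 ((\<lambda>q. norm (q - c)) ` Q))" using Q by (intro Max_ge) auto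
  then have "B > 0" unfolding B_def by linarith
  define e where "e = T / (2 * B)"
  have e: "e > 0" "e * B = T / 2" unfolding e_def using T \<open>B > 0\<close> by auto
  \<comment> \<open>G is only a seminorm, whose balls may have infinite measure; adding a small multiple of
    the norm makes them bounded without spoiling the separation, and costs at most T/2 on Q.\<close>
  define H where "H z = G z + e * norm z" for z
  have "H (z + w) \<le> H z + H w" for z w
  proof -
    have "e * norm (z + w) \<le> e * norm z + e * norm w"
      using norm_triangle_ineq[of z w] e(1) by (simp add: mult_left_mono flip: distrib_left)
    then show ?thesis using subadd[of z w] unfolding H_def by simp
  qed
  moreover have "H (r *\<^sub>R z) = \<bar>r\<bar> * H z" for r z
    unfolding H_def homog by (simp add: algebra_simps)
  moreover have "continuous_on UNIV H"
    unfolding H_def by (intro continuous_intros cont)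
  moreover have "e * norm z \<le> H z" for z
    unfolding H_def using G_nonneg[of z] by simp
  moreover have "H (q - c) < R + T / 2" if "q \<in> Q" for q
  proof -
    have "norm (q - c) \<le> B" using Max_ge_norm[OF that] unfolding B_def by linarith
    then have "e * norm (q - c) \<le> T / 2" using e by (metis less_imp_le mult_left_mono)
    then show ?thesis using bounded[OF that] unfolding H_def by simp
  qed
  moreover have "T \<le> H (q - q')" if "q \<in> Q" "q' \<in> Q" "q \<noteq> q'" for q q'
    using separated[OF that] e(1) unfolding H_def by (simp add: add_increasing2)
  ultimately have "real (card Q) * T ^ DIM('a) \<le> (2 * (R + T / 2) + T) ^ DIM('a)"
    using Q T R e(1) by (intro card_separated_in_coercive_gauge_ball[of H e]) auto
  then show ?thesis by (simp add: algebra_simps)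
qed

definition max_norm :: "'s set \<Rightarrow> ('s \<Rightarrow> 'a \<Rightarrow> 'b::real_normed_vector) \<Rightarrow> 'a \<Rightarrow> real" where
  "max_norm E L z = Max ((\<lambda>\<sigma>. norm (L \<sigma> z)) ` E)"

lemma continuous_on_max_norm:
  assumes "finite E" "E \<noteq> {}" "\<And>\<sigma>. \<sigma> \<in> E \<Longrightarrow> continuous_on UNIV (L \<sigma>)"
  shows "continuous_on UNIV (max_norm E L)"
  unfolding max_norm_def using assms
proof (induction E rule: finite_ne_induct)
  case (insert \<tau> F)
  then have "continuous_on UNIV (\<lambda>z. max (norm (L \<tau> z)) (Max ((\<lambda>\<sigma>. norm (L \<sigma> z)) ` F)))"
    by (intro continuous_on_max continuous_on_norm) auto
  then show ?case using insert.hyps by simp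
qed (auto intro: continuous_on_norm)

lemma max_norm_add_le:
  assumes "finite E" "E \<noteq> {}" "\<And>\<sigma>. \<sigma> \<in> E \<Longrightarrow> linear (L \<sigma>)"
  shows "max_norm E L (z + w) \<le> max_norm E L z + max_norm E L w"
  unfolding max_norm_def
proof (subst Max_le_iff, (use assms in auto)[2], safe)
  fix \<sigma> assume "\<sigma> \<in> E"
  then have "norm (L \<sigma> (z + w)) \<le> norm (L \<sigma> z) + norm (L \<sigma> w)"
    using assms(3) by (simp add: linear_add norm_triangle_ineq)
  also have "\<dots> \<le> Max ((\<lambda>\<sigma>. norm (L \<sigma> z)) ` E) + Max ((\<lambda>\<sigma>. norm (L \<sigma> w)) ` E)"
    using assms(1) \<open>\<sigma> \<in> E\<close> by (intro add_mono Max_ge) auto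
  finally show "norm (L \<sigma> (z + w)) \<le> \<dots>" .
qed

lemma max_norm_scaleR:
  assumes "finite E" "E \<noteq> {}" "\<And>\<sigma>. \<sigma> \<in> E \<Longrightarrow> linear (L \<sigma>)"
  shows "max_norm E L (r *\<^sub>R z) = \<bar>r\<bar> * max_norm E L z"
proof -
  have "(\<lambda>\<sigma>. norm (L \<sigma> (r *\<^sub>R z))) ` E = (\<lambda>t. \<bar>r\<bar> * t) ` (\<lambda>\<sigma>. norm (L \<sigma> z)) ` E"
    using assms(3) by (auto simp: linear_scale image_image)
  moreover have "mono (\<lambda>t::real. \<bar>r\<bar> * t)" by (rule monoI) (simp add: mult_left_mono)
  ultimately show ?thesis
    unfolding max_norm_def using assms(1,2) by (simp add: mono_Max_commute)
qed

lemma ex_maximal_separated_subset: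
  fixes d :: "'a \<Rightarrow> 'a \<Rightarrow> real"
  assumes P: "finite P"
    and sym: "\<And>x y. x \<in> P \<Longrightarrow> y \<in> P \<Longrightarrow> d x y = d y x"
    and refl: "\<And>x. x \<in> P \<Longrightarrow> d x x < T"
  shows "\<exists>Q\<subseteq>P. (\<forall>q\<in>Q. \<forall>q'\<in>Q. q \<noteq> q' \<longrightarrow> T \<le> d q q') \<and> (\<forall>x\<in>P. \<exists>q\<in>Q. d x q < T)"
proof -
  define separated where
    "separated A \<longleftrightarrow> A \<subseteq> P \<and> (\<forall>q\<in>A. \<forall>q'\<in>A. q \<noteq> q' \<longrightarrow> T \<le> d q q')" for A
  have "separated {}" unfolding separated_def by simp
  moreover have "card A < Suc (card P)" if "separated A" for A
    using that card_mono[OF P] unfolding separated_def by (simp add: le_imp_less_Suc)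
  ultimately obtain Q where Q: "separated Q" and max: "\<And>A. separated A \<Longrightarrow> card A \<le> card Q"
    using ex_has_greatest_nat[of separated "{}" card "Suc (card P)"] by blast
  have cover: "\<exists>q\<in>Q. d x q < T" if x: "x \<in> P" for x
  proof (rule ccontr)
    assume "\<not> (\<exists>q\<in>Q. d x q < T)"
    then have far: "\<And>q. q \<in> Q \<Longrightarrow> T \<le> d x q" by auto
    have "x \<notin> Q"
    proof
      assume "x \<in> Q"
      then have "T \<le> d x x" by (rule far)
      then show False using refl[OF x] by simp
    qed
    have "separated (insert x Q)"
      unfolding separated_def
    proof (intro conjI ballI impI)
      show "insert x Q \<subseteq> P" using Q x unfolding separated_def by simp
      fix q q' assume "q \<in> insert x Q" "q' \<in> insert x Q" "q \<noteq> q'"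
      then consider "q = x" "q' \<in> Q" | "q' = x" "q \<in> Q" | "q \<in> Q" "q' \<in> Q"
        by auto
      then show "T \<le> d q q'"
      proof cases
        case 1
        then show ?thesis using far by simp
      next
        case 2
        moreover have "q \<in> P" using 2 Q unfolding separated_def by blast
        ultimately show ?thesis using far[of q] sym[OF x] by simp
      next
        case 3
        then show ?thesis using Q \<open>q \<noteq> q'\<close> unfolding separated_def by blast
      qed
    qed
    then have "card (insert x Q) \<le> card Q" by (rule max)
    moreover have "finite Q" using Q P finite_subset unfolding separated_def by blast
    ultimately show False using \<open>x \<notin> Q\<close> by simp
  qed
  have "Q \<subseteq> P" "\<forall>q\<in>Q. \<forall>q'\<in>Q. q \<noteq> q' \<longrightarrow> T \<le> d q q'"
    using Q unfolding separated_def by auto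
  moreover have "\<forall>x\<in>P. \<exists>q\<in>Q. d x q < T" by (intro ballI cover)
  ultimately show ?thesis by blast
qed

section \<open>Reduced elements of a cubic field\<close>

interpretation of_rat_poly_hom: map_poly_comm_ring_hom "of_rat :: rat \<Rightarrow> complex" ..

lemma embedding_add: "\<sigma> \<in> embeddings K \<Longrightarrow> x \<in> K \<Longrightarrow> y \<in> K \<Longrightarrow> \<sigma> (x + y) = \<sigma> x + \<sigma> y"
  and embedding_mult: "\<sigma> \<in> embeddings K \<Longrightarrow> x \<in> K \<Longrightarrow> y \<in> K \<Longrightarrow> \<sigma> (x * y) = \<sigma> x * \<sigma> y"
  and embedding_1: "\<sigma> \<in> embeddings K \<Longrightarrow> \<sigma> 1 = 1"
  and embedding_outside: "\<sigma> \<in> embeddings K \<Longrightarrow> x \<notin> K \<Longrightarrow> \<sigma> x = 0"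
  unfolding embeddings_def by auto

lemma poly_degree_le_2:
  fixes q :: "'a::comm_ring_1 poly"
  assumes "degree q \<le> 2"
  shows "poly q z = coeff q 0 + coeff q 1 * z + coeff q 2 * z ^ 2"
proof -
  have "q = [:coeff q 0, coeff q 1, coeff q 2:]"
    using assms by (intro poly_eqI) (auto simp: coeff_pCons coeff_eq_0 numeral_2_eq_2 split: nat.split)
  then have "poly q z = poly [:coeff q 0, coeff q 1, coeff q 2:] z" by metis
  then show ?thesis by (simp add: algebra_simps power2_eq_square)
qed

lemma linear_Re_Im_combination: "linear (\<lambda>z. of_real (Re z) * a + of_real (Im z) * (b :: complex))"
  by (rule linearI) (simp_all add: algebra_simps scaleR_conv_of_real)

lemma complex_of_real_of_rat: "complex_of_real (of_rat r) = of_rat r"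
  by (simp add: of_rat_def)

lemma S_subset_ring_of_integers: "S K Y \<subseteq> ring_of_integers K"
  unfolding S_def by auto

lemma S_mono: "T \<le> Y \<Longrightarrow> S K T \<subseteq> S K Y"
  unfolding S_def by auto

context
  fixes K :: "complex set" and f :: "rat poly" and \<theta> :: complex
  assumes deg_f: "degree f = 3" and root: "poly (map_poly of_rat f) \<theta> = 0"
    and K_eq: "K = {poly (map_poly of_rat q) \<theta> | q. True}"
begin

lemma mem_K: "x \<in> K \<longleftrightarrow> (\<exists>q. x = poly (map_poly of_rat q) \<theta>)"
  using K_eq by blast

lemma poly_in_K: "poly (map_poly of_rat q) \<theta> \<in> K"
  using mem_K by blast

lemma of_rat_in_K: "of_rat r \<in> K"
  using poly_in_K[of "[:r:]"] by (simp add: of_rat_hom.map_poly_pCons_hom)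

lemma theta_power_in_K: "\<theta> ^ n \<in> K"
  using poly_in_K[of "monom 1 n"] by (simp add: poly_monom)

lemma K_add: "x \<in> K \<Longrightarrow> y \<in> K \<Longrightarrow> x + y \<in> K"
  by (metis mem_K of_rat_poly_hom.hom_add poly_add)

lemma K_diff: "x \<in> K \<Longrightarrow> y \<in> K \<Longrightarrow> x - y \<in> K"
  by (metis mem_K of_rat_poly_hom.hom_minus poly_diff)

lemma K_mult: "x \<in> K \<Longrightarrow> y \<in> K \<Longrightarrow> x * y \<in> K"
  by (metis mem_K of_rat_poly_hom.hom_mult poly_mult)

lemma K_reduce:
  assumes "x \<in> K"
  obtains q where "degree q \<le> 2" "x = poly (map_poly of_rat q) \<theta>"
proof -
  obtain p where p: "x = poly (map_poly of_rat p) \<theta>" using assms mem_K by blast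
  have "f \<noteq> 0" using deg_f by auto
  then have "degree (p mod f) \<le> 2" using degree_mod_less[of f p] deg_f by auto
  moreover have "x = poly (map_poly of_rat (p mod f)) \<theta>"
    using p root by (simp add: of_rat_hom.map_poly_mod poly_mod)
  ultimately show ?thesis using that by blast
qed

lemma embedding_0: "\<sigma> \<in> embeddings K \<Longrightarrow> \<sigma> 0 = 0"
  using embedding_add[of \<sigma> K 0 0] of_rat_in_K[of 0] by simp

lemma embedding_diff: "\<sigma> \<in> embeddings K \<Longrightarrow> x \<in> K \<Longrightarrow> y \<in> K \<Longrightarrow> \<sigma> (x - y) = \<sigma> x - \<sigma> y"
  using embedding_add[of \<sigma> K "x - y" y] K_diff by (simp add: eq_diff_eq)

lemma embedding_of_int:
  assumes "\<sigma> \<in> embeddings K"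
  shows "\<sigma> (of_int n) = of_int n"
proof -
  have nat: "\<sigma> (of_nat m) = of_nat m" for m
    using embedding_add[OF assms of_rat_in_K[of 1] of_rat_in_K[of "of_nat _"]]
    by (induction m) (simp_all add: embedding_0[OF assms] embedding_1[OF assms] add.commute)
  show ?thesis
  proof (cases "n \<ge> 0")
    case True
    then show ?thesis using nat[of "nat n"] by simp
  next
    case False
    have "\<sigma> (0 - of_nat (nat (- n))) = 0 - of_nat (nat (- n))"
      using embedding_diff[OF assms of_rat_in_K[of 0] of_rat_in_K[of "of_nat _"]] nat
      by (simp add: embedding_0[OF assms])
    then show ?thesis using False by simp
  qed
qed

lemma embedding_of_rat:
  assumes "\<sigma> \<in> embeddings K"
  shows "\<sigma> (of_rat r) = of_rat r"
proof -
  obtain a b where r: "r = Rat.Fract a b" and b: "b > 0" by (cases r) auto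
  have "of_rat r * of_int b = (of_int a :: complex)" using r b by (simp add: of_rat_rat)
  then have "\<sigma> (of_rat r) * of_int b = of_int a"
    using embedding_mult[OF assms of_rat_in_K of_rat_in_K[of "of_int b"]] embedding_of_int[OF assms]
    by (metis of_rat_of_int_eq)
  then show ?thesis using r b by (simp add: of_rat_rat field_simps)
qed

lemma embedding_poly:
  assumes "\<sigma> \<in> embeddings K"
  shows "\<sigma> (poly (map_poly of_rat q) \<theta>) = poly (map_poly of_rat q) (\<sigma> \<theta>)"
proof (induction q)
  case 0
  then show ?case using embedding_0[OF assms] by simp
next
  case (pCons a p)
  have \<theta>: "\<theta> \<in> K" using theta_power_in_K[of 1] by simp
  have "\<sigma> (poly (map_poly of_rat (pCons a p)) \<theta>) = \<sigma> (of_rat a + \<theta> * poly (map_poly of_rat p) \<theta>)"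
    by (simp add: of_rat_hom.map_poly_pCons_hom)
  also have "\<dots> = of_rat a + \<sigma> \<theta> * \<sigma> (poly (map_poly of_rat p) \<theta>)"
    using \<theta> poly_in_K of_rat_in_K K_mult
    by (simp add: embedding_add[OF assms] embedding_mult[OF assms] embedding_of_rat[OF assms])
  finally show ?case using pCons.IH by (simp add: of_rat_hom.map_poly_pCons_hom)
qed

lemma finite_embeddings: "finite (embeddings K)"
proof -
  have "inj_on (\<lambda>\<sigma>. \<sigma> \<theta>) (embeddings K)"
  proof (rule inj_onI, rule ext)
    fix \<sigma> \<tau> x assume \<sigma>: "\<sigma> \<in> embeddings K" and \<tau>: "\<tau> \<in> embeddings K" and "\<sigma> \<theta> = \<tau> \<theta>"
    show "\<sigma> x = \<tau> x"
    proof (cases "x \<in> K")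
      case True
      then obtain q where "x = poly (map_poly of_rat q) \<theta>" using mem_K by blast
      then show ?thesis using embedding_poly[OF \<sigma>] embedding_poly[OF \<tau>] \<open>\<sigma> \<theta> = \<tau> \<theta>\<close> by simp
    qed (simp add: embedding_outside[OF \<sigma>] embedding_outside[OF \<tau>])
  qed
  moreover have "poly (map_poly of_rat f) (\<sigma> \<theta>) = 0" if "\<sigma> \<in> embeddings K" for \<sigma>
    using embedding_poly[OF that, of f] root embedding_0[OF that] by simp
  then have "(\<lambda>\<sigma>. \<sigma> \<theta>) ` embeddings K \<subseteq> {z. poly (map_poly of_rat f) z = 0}" by blast
  moreover have "finite {z. poly (map_poly (of_rat :: rat \<Rightarrow> complex) f) z = 0}"
    using deg_f by (intro poly_roots_finite) auto
  ultimately show ?thesis using finite_subset finite_imageD by blast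
qed

lemma embeddings_nonempty: "embeddings K \<noteq> {}"
proof -
  have "(\<lambda>x. if x \<in> K then x else 0) \<in> embeddings K"
    unfolding embeddings_def using K_add K_mult of_rat_in_K[of 1] by auto
  then show ?thesis by blast
qed

lemma card_embeddings_pos: "card (embeddings K) > 0"
  using finite_embeddings embeddings_nonempty card_gt_0_iff by blast

lemma trace_diff: "x \<in> K \<Longrightarrow> y \<in> K \<Longrightarrow> trace K (x - y) = trace K x - trace K y"
  unfolding trace_def by (simp add: embedding_diff sum_subtractf cong: sum.cong)

lemma trace_of_int: "trace K (of_int n) = of_nat (card (embeddings K)) * of_int n"
  unfolding trace_def by (simp add: embedding_of_int)

definition centered :: "(complex \<Rightarrow> complex) \<Rightarrow> complex \<Rightarrow> complex" where
  "centered \<sigma> x = \<sigma> x - trace K x / of_nat (card (embeddings K))"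

lemma embedding_trace_zero:
  assumes \<sigma>: "\<sigma> \<in> embeddings K" and q: "degree q \<le> 2"
    and trace: "trace K (poly (map_poly of_rat q) \<theta>) = 0"
  shows "\<sigma> (poly (map_poly of_rat q) \<theta>)
    = of_rat (coeff q 1) * centered \<sigma> \<theta> + of_rat (coeff q 2) * centered \<sigma> (\<theta> ^ 2)"
proof -
  define a b c where "a = (of_rat (coeff q 0) :: complex)" "b = (of_rat (coeff q 1) :: complex)"
    "c = (of_rat (coeff q 2) :: complex)"
  define n where "n = (of_nat (card (embeddings K)) :: complex)"
  have n: "n \<noteq> 0" using card_embeddings_pos unfolding n_def by simp
  have \<tau>_poly: "\<tau> (poly (map_poly of_rat q) \<theta>) = a + b * \<tau> \<theta> + c * \<tau> (\<theta> ^ 2)"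
    if "\<tau> \<in> embeddings K" for \<tau>
    using embedding_poly[OF that, of q] embedding_poly[OF that, of "monom 1 2"] q
    unfolding a_b_c_def by (simp add: poly_degree_le_2 poly_monom)
  have "0 = n * a + b * trace K \<theta> + c * trace K (\<theta> ^ 2)"
    using trace unfolding trace_def n_def
    by (simp add: \<tau>_poly sum.distrib sum_distrib_left cong: sum.cong)
  then have "a * n = - b * trace K \<theta> - c * trace K (\<theta> ^ 2)"
    by (simp add: mult.commute eq_diff_eq add_eq_0_iff2 add.assoc)
  then have a: "a = - b * (trace K \<theta> / n) - c * (trace K (\<theta> ^ 2) / n)"
    using n by (metis diff_divide_distrib mult_minus_left nonzero_mult_div_cancel_right times_divide_eq_right)
  have "\<sigma> (poly (map_poly of_rat q) \<theta>) = a + b * \<sigma> \<theta> + c * \<sigma> (\<theta> ^ 2)"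
    by (rule \<tau>_poly[OF \<sigma>])
  also have "\<dots> = b * centered \<sigma> \<theta> + c * centered \<sigma> (\<theta> ^ 2)"
    unfolding centered_def n_def[symmetric] a by (simp add: algebra_simps)
  finally show ?thesis unfolding a_b_c_def .
qed

lemma abs_inf_0: "abs_inf K 0 = 0"
proof -
  have "(\<lambda>\<sigma>. cmod (\<sigma> 0)) ` embeddings K = (\<lambda>\<sigma>. 0) ` embeddings K"
    by (intro image_cong) (simp_all add: embedding_0)
  then show ?thesis unfolding abs_inf_def using embeddings_nonempty by (simp add: image_constant_conv)
qed

lemma abs_inf_diff_commute: "x \<in> K \<Longrightarrow> y \<in> K \<Longrightarrow> abs_inf K (x - y) = abs_inf K (y - x)"
  unfolding abs_inf_def by (intro arg_cong[where f = Max] image_cong) (simp_all add: embedding_diff norm_minus_commute)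

lemma abs_inf_diff_le:
  assumes "x \<in> K" "y \<in> K"
  shows "abs_inf K (x - y) \<le> abs_inf K x + abs_inf K y"
  unfolding abs_inf_def
proof (subst Max_le_iff, (use finite_embeddings embeddings_nonempty in auto)[2], safe)
  fix \<sigma> assume \<sigma>: "\<sigma> \<in> embeddings K"
  have "cmod (\<sigma> (x - y)) \<le> cmod (\<sigma> x) + cmod (\<sigma> y)"
    unfolding embedding_diff[OF \<sigma> assms] by (rule norm_triangle_ineq4)
  also have "\<dots> \<le> Max ((\<lambda>\<sigma>. cmod (\<sigma> x)) ` embeddings K) + Max ((\<lambda>\<sigma>. cmod (\<sigma> y)) ` embeddings K)"
    using finite_embeddings \<sigma> by (intro add_mono Max_ge) auto
  finally show "cmod (\<sigma> (x - y)) \<le> \<dots>" .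
qed

definition K_coeffs :: "complex \<Rightarrow> rat poly" where
  "K_coeffs x = (SOME q. degree q \<le> 2 \<and> x = poly (map_poly of_rat q) \<theta>)"

lemma K_coeffs:
  assumes "x \<in> K"
  shows "degree (K_coeffs x) \<le> 2" "x = poly (map_poly of_rat (K_coeffs x)) \<theta>"
proof -
  have "\<exists>q. degree q \<le> 2 \<and> x = poly (map_poly of_rat q) \<theta>"
    using K_reduce[OF assms] by metis
  then have "degree (K_coeffs x) \<le> 2 \<and> x = poly (map_poly of_rat (K_coeffs x)) \<theta>"
    unfolding K_coeffs_def by (rule someI_ex)
  then show "degree (K_coeffs x) \<le> 2" "x = poly (map_poly of_rat (K_coeffs x)) \<theta>" by auto
qed

(* Coordinates (b, c) of x = a + b\<theta> + c\<theta>\<^sup>2, encoded as the point b + c\<i> of the plane.  They are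
   a choice; for x, y of equal trace the
   difference of their points determines every conjugate of x - y, see abs_inf_diff_eq_gauge. *)

definition plane :: "complex \<Rightarrow> complex" where
  "plane x = Complex (of_rat (coeff (K_coeffs x) 1)) (of_rat (coeff (K_coeffs x) 2))"

definition gauge :: "complex \<Rightarrow> real" where
  "gauge = max_norm (embeddings K)
     (\<lambda>\<sigma> z. of_real (Re z) * centered \<sigma> \<theta> + of_real (Im z) * centered \<sigma> (\<theta> ^ 2))"

lemma continuous_on_gauge: "continuous_on UNIV gauge"
  unfolding gauge_def
  by (rule continuous_on_max_norm[OF finite_embeddings embeddings_nonempty]) (intro continuous_intros)

lemma gauge_add_le: "gauge (z + w) \<le> gauge z + gauge w"
  unfolding gauge_def
  by (rule max_norm_add_le[OF finite_embeddings embeddings_nonempty linear_Re_Im_combination])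

lemma gauge_scaleR: "gauge (r *\<^sub>R z) = \<bar>r\<bar> * gauge z"
  unfolding gauge_def
  by (rule max_norm_scaleR[OF finite_embeddings embeddings_nonempty linear_Re_Im_combination])

lemma abs_inf_diff_eq_gauge:
  assumes x: "x \<in> K" and y: "y \<in> K" and trace: "trace K x = trace K y"
  shows "abs_inf K (x - y) = gauge (plane x - plane y)"
proof -
  define q where "q = K_coeffs x - K_coeffs y"
  have xy: "x - y = poly (map_poly of_rat q) \<theta>"
    unfolding q_def using K_coeffs(2)[OF x] K_coeffs(2)[OF y] by (simp add: of_rat_poly_hom.hom_minus)
  have "degree q \<le> 2" unfolding q_def using K_coeffs(1)[OF x] K_coeffs(1)[OF y]
    by (meson degree_diff_le)
  moreover have "trace K (poly (map_poly of_rat q) \<theta>) = 0"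
    using trace trace_diff[OF x y] xy by simp
  moreover have "of_real (Re (plane x - plane y)) = (of_rat (coeff q 1) :: complex)"
    "of_real (Im (plane x - plane y)) = (of_rat (coeff q 2) :: complex)"
    unfolding plane_def q_def by (simp_all add: of_rat_diff complex_of_real_of_rat)
  ultimately have "\<sigma> (x - y) = of_real (Re (plane x - plane y)) * centered \<sigma> \<theta>
      + of_real (Im (plane x - plane y)) * centered \<sigma> (\<theta> ^ 2)" if "\<sigma> \<in> embeddings K" for \<sigma>
    using embedding_trace_zero[OF that] unfolding xy by simp
  then show ?thesis
    unfolding abs_inf_def gauge_def max_norm_def by (intro arg_cong[where f = Max] image_cong) auto
qed

lemma diff_mem_S:
  assumes x: "x \<in> ring_of_integers K" and y: "y \<in> ring_of_integers K"
    and trace: "trace K x = trace K y" and "x \<noteq> y" and small: "abs_inf K (x - y) < T"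
  shows "x - y \<in> S K T"
proof -
  have K: "x \<in> K" "y \<in> K" using x y unfolding ring_of_integers_def by auto
  have trace_0: "trace K (x - y) = 0" using trace trace_diff[OF K] by simp
  have "x - y \<in> ring_of_integers K"
    using x y K_diff[OF K] algebraic_int_diff unfolding ring_of_integers_def by auto
  moreover have "x - y \<notin> \<int>"
  proof
    assume "x - y \<in> \<int>"
    then obtain n where "x - y = of_int n" by (auto elim: Ints_cases)
    moreover have "n = 0" using trace_0 trace_of_int[of n] card_embeddings_pos \<open>x - y = of_int n\<close> by simp
    ultimately show False using \<open>x \<noteq> y\<close> by simp
  qed
  ultimately show ?thesis using trace_0 small unfolding S_def by simp
qed

lemma card_trace_ball_le:
  assumes q: "q \<in> ring_of_integers K" and fin: "finite (S K T)"
  shows "card {x \<in> S K Y. trace K x = trace K q \<and> abs_inf K (x - q) < T} \<le> card (S K T) + 1"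
proof -
  let ?B = "{x \<in> S K Y. trace K x = trace K q \<and> abs_inf K (x - q) < T}"
  have "(\<lambda>x. x - q) ` ?B \<subseteq> insert 0 (S K T)"
    using diff_mem_S[OF _ q] S_subset_ring_of_integers by fastforce
  then have "card ?B \<le> card (insert 0 (S K T))"
    using fin by (intro card_inj_on_le[of "\<lambda>x. x - q"]) (auto intro: inj_onI)
  also have "\<dots> \<le> card (S K T) + 1" using fin by (simp add: card_insert_if)
  finally show ?thesis .
qed

lemma card_separated_trace_fiber_le:
  assumes Q: "Q \<subseteq> {x \<in> S K Y. trace K x = t}" "finite Q" and T: "0 < T" "T \<le> Y"
    and separated: "\<And>q q'. q \<in> Q \<Longrightarrow> q' \<in> Q \<Longrightarrow> q \<noteq> q' \<Longrightarrow> T \<le> abs_inf K (q - q')"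
  shows "real (card Q) * T ^ 2 \<le> 36 * Y ^ 2"
proof (cases "Q = {}")
  case False
  then obtain p where p: "p \<in> Q" by blast
  have in_K: "q \<in> K" if "q \<in> Q" for q
    using that Q(1) S_subset_ring_of_integers unfolding ring_of_integers_def by blast
  have dist: "abs_inf K (q - q') = gauge (plane q - plane q')" if "q \<in> Q" "q' \<in> Q" for q q'
    using that Q(1) by (intro abs_inf_diff_eq_gauge in_K) auto
  have "inj_on plane Q"
  proof (rule inj_onI, rule ccontr)
    fix q q' assume "q \<in> Q" "q' \<in> Q" "plane q = plane q'" "q \<noteq> q'"
    then have "T \<le> gauge 0" using separated dist by fastforce
    then show False using gauge_scaleR[of 0 0] T by simp
  qed
  then have "real (card Q) * T ^ DIM(complex) = real (card (plane ` Q)) * T ^ DIM(complex)"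
    by (simp add: card_image)
  also have "\<dots> \<le> (2 * (2 * Y + T)) ^ DIM(complex)"
  proof (rule card_separated_in_gauge_ball[OF continuous_on_gauge gauge_add_le gauge_scaleR])
    show "finite (plane ` Q)" "0 < T" "0 \<le> 2 * Y" using Q T by auto
  next
    fix z assume "z \<in> plane ` Q"
    then obtain q where q: "q \<in> Q" "z = plane q" by blast
    have "gauge (z - plane p) = abs_inf K (q - p)" using dist q p by simp
    also have "\<dots> \<le> abs_inf K q + abs_inf K p" using abs_inf_diff_le in_K q p by blast
    also have "\<dots> < 2 * Y" using q(1) p Q(1) unfolding S_def by (smt (verit) mem_Collect_eq subsetD)
    finally show "gauge (z - plane p) < 2 * Y" .
  next
    fix z z' assume "z \<in> plane ` Q" "z' \<in> plane ` Q" "z \<noteq> z'"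
    then show "T \<le> gauge (z - z')" using separated dist by auto
  qed
  also have "\<dots> \<le> (6 * Y) ^ DIM(complex)" using T by (intro power_mono) auto
  finally show ?thesis by (simp add: power_mult_distrib)
qed simp

lemma card_trace_fiber_le_cover:
  assumes fin: "finite (S K Y)" and TY: "T \<le> Y"
    and Q: "Q \<subseteq> {x \<in> S K Y. trace K x = t}" "finite Q"
    and cover: "\<forall>x\<in>{x \<in> S K Y. trace K x = t}. \<exists>q\<in>Q. abs_inf K (x - q) < T"
  shows "card {x \<in> S K Y. trace K x = t} \<le> card Q * (card (S K T) + 1)"
proof -
  define B where "B q = {x \<in> S K Y. trace K x = trace K q \<and> abs_inf K (x - q) < T}" for q
  have "{x \<in> S K Y. trace K x = t} \<subseteq> (\<Union>q\<in>Q. B q)"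
  proof
    fix x assume x: "x \<in> {x \<in> S K Y. trace K x = t}"
    then obtain q where "q \<in> Q" "abs_inf K (x - q) < T" using cover by blast
    moreover have "trace K x = trace K q" using x \<open>q \<in> Q\<close> Q(1) by auto
    ultimately show "x \<in> (\<Union>q\<in>Q. B q)" using x unfolding B_def by blast
  qed
  then have "card {x \<in> S K Y. trace K x = t} \<le> card (\<Union>q\<in>Q. B q)"
    using Q(2) fin by (intro card_mono) (auto simp: B_def)
  also have "\<dots> \<le> (\<Sum>q\<in>Q. card (B q))"
    using Q(2) by (rule card_UN_le)
  also have "\<dots> \<le> card Q * (card (S K T) + 1)"
  proof -
    have "finite (S K T)" using S_mono[OF TY] fin finite_subset by blast
    moreover have "q \<in> ring_of_integers K" if "q \<in> Q" for q
      using that Q(1) S_subset_ring_of_integers by blast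
    ultimately have "card (B q) \<le> card (S K T) + 1" if "q \<in> Q" for q
      unfolding B_def using that by (intro card_trace_ball_le) auto
    then show ?thesis using sum_bounded_above[of Q "\<lambda>q. card (B q)" "card (S K T) + 1"] by simp
  qed
  finally show ?thesis .
qed

lemma card_trace_fiber_le:
  assumes T: "0 < T" "T \<le> Y" and fin: "finite (S K Y)"
  shows "real (card {x \<in> S K Y. trace K x = t}) \<le> 36 * (Y / T) ^ 2 * (real (card (S K T)) + 1)"
proof -
  define P where "P = {x \<in> S K Y. trace K x = t}"
  have P: "finite P" "P \<subseteq> K"
    using fin S_subset_ring_of_integers unfolding P_def ring_of_integers_def by auto
  have dist_commute: "abs_inf K (x - y) = abs_inf K (y - x)" if "x \<in> P" "y \<in> P" for x y
    using abs_inf_diff_commute P(2) that by blast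
  have dist_self: "abs_inf K (x - x) < T" if "x \<in> P" for x
    using abs_inf_0 T by simp
  obtain Q where Q: "Q \<subseteq> P"
    and separated: "\<forall>q\<in>Q. \<forall>q'\<in>Q. q \<noteq> q' \<longrightarrow> T \<le> abs_inf K (q - q')"
    and cover: "\<forall>x\<in>P. \<exists>q\<in>Q. abs_inf K (x - q) < T"
    using ex_maximal_separated_subset[where d = "\<lambda>x y. abs_inf K (x - y)", OF P(1) dist_commute dist_self]
    by blast
  have "finite Q" using P(1) Q finite_subset by blast
  have "card P \<le> card Q * (card (S K T) + 1)"
    using card_trace_fiber_le_cover[OF fin T(2) _ \<open>finite Q\<close>] Q cover unfolding P_def by blast
  then have "real (card P) \<le> real (card Q) * (real (card (S K T)) + 1)"
    by (metis of_nat_1 of_nat_add of_nat_le_iff of_nat_mult)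
  also have "\<dots> \<le> 36 * (Y / T) ^ 2 * (real (card (S K T)) + 1)"
  proof (rule mult_right_mono)
    have "real (card Q) * T ^ 2 \<le> 36 * Y ^ 2"
      using Q \<open>finite Q\<close> T separated unfolding P_def by (intro card_separated_trace_fiber_le) auto
    then show "real (card Q) \<le> 36 * (Y / T) ^ 2"
      using T by (simp add: field_simps)
  qed simp
  finally show ?thesis unfolding P_def .
qed

lemma card_S_le:
  assumes T: "0 < T" "T \<le> Y" and fin: "finite (S K Y)"
  shows "real (card (S K Y)) \<le> 108 * (Y / T) ^ 2 * (real (card (S K T)) + 1)"
proof -
  have "S K Y = (\<Union>t\<in>{-1, 0, 1}. {x \<in> S K Y. trace K x = t})" unfolding S_def by auto
  then have "card (S K Y) \<le> (\<Sum>t\<in>{-1, 0, 1}. card {x \<in> S K Y. trace K x = t})"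
    using card_UN_le[of "{-1, 0, 1}" "\<lambda>t. {x \<in> S K Y. trace K x = t}"] by simp
  then have "real (card (S K Y)) \<le> (\<Sum>t\<in>{-1, 0, 1::complex}. real (card {x \<in> S K Y. trace K x = t}))"
    unfolding of_nat_sum[symmetric] by linarith
  also have "\<dots> \<le> (\<Sum>t\<in>{-1, 0, 1::complex}. 36 * (Y / T) ^ 2 * (real (card (S K T)) + 1))"
    by (intro sum_mono card_trace_fiber_le T fin)
  finally show ?thesis by simp
qed

end

lemma card_S_ratio_le:
  assumes K: "cubic_field K" and T: "0 < T" "T \<le> Y" and nonempty: "S K T \<noteq> {}"
  shows "real (card (S K Y)) / real (card (S K T)) \<le> 216 * (Y / T) ^ 2"
proof (cases "finite (S K Y)")
  case True
  obtain f \<theta> where f: "degree f = 3" "poly (map_poly of_rat f) \<theta> = 0"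
    and K_eq: "K = {poly (map_poly of_rat q) \<theta> | q. True}"
    using K unfolding cubic_field_def by blast
  have "finite (S K T)" using S_mono[OF T(2)] True finite_subset by blast
  then have s: "real (card (S K T)) \<ge> 1" using nonempty by (simp add: Suc_le_eq card_gt_0_iff)
  have "real (card (S K Y)) \<le> 108 * (Y / T) ^ 2 * (real (card (S K T)) + 1)"
    using card_S_le[OF f K_eq T True] .
  also have "\<dots> \<le> 108 * (Y / T) ^ 2 * (2 * real (card (S K T)))"
    using s by (intro mult_left_mono) auto
  finally show ?thesis using s by (simp add: pos_divide_le_eq)
qed simp

lemma power2_div_powr_quarter_le:
  fixes C X Y :: real
  assumes "C \<ge> 1" "X > 0"
  shows "(Y / (C * X powr (1/4))) ^ 2 \<le> Y ^ 2 / X powr (1/2)"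
proof -
  have "(X powr (1/4)) ^ 2 = X powr (1/2)"
    by (simp add: power2_eq_square flip: powr_add)
  then have "(C * X powr (1/4)) ^ 2 = C ^ 2 * X powr (1/2)"
    by (simp add: power_mult_distrib)
  then show ?thesis
    using assms by (simp add: power_divide frac_le)
qed

theorem lemma3p7:
  fixes C :: real
  assumes "C > 1"
    and "\<forall>Z::real. \<forall>K. Z > 0 \<and> cubic_field K \<and> cmod (disc K) \<le> Z \<longrightarrow> S K (C * Z powr (1/4)) \<noteq> {}"
  shows "\<exists>M::real. \<forall>X Y::real. \<forall>K. X > 0 \<and> Y > 0 \<and> Y \<ge> C * X powr (1/4) \<and> cubic_field K \<and>
           X / 2 \<le> cmod (disc K) \<and> cmod (disc K) \<le> X \<longrightarrow>
           real (card (S K Y)) / real (card (S K (C * X powr (1/4)))) \<le> M * (Y^2 / X powr (1/2))"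
proof (intro exI[of _ 216] allI impI)
  fix X Y :: real and K
  assume H: "X > 0 \<and> Y > 0 \<and> Y \<ge> C * X powr (1/4) \<and> cubic_field K \<and>
    X / 2 \<le> cmod (disc K) \<and> cmod (disc K) \<le> X"
  define T where "T = C * X powr (1/4)"
  have X: "X > 0" and K: "cubic_field K" and TY: "T \<le> Y" and disc: "cmod (disc K) \<le> X"
    using H unfolding T_def by auto
  have "0 < T" unfolding T_def using assms(1) X by simp
  moreover have "S K T \<noteq> {}" unfolding T_def using assms(2) X K disc by simp
  ultimately have "real (card (S K Y)) / real (card (S K T)) \<le> 216 * (Y / T) ^ 2"
    using card_S_ratio_le[OF K _ TY] by blast
  also have "\<dots> \<le> 216 * (Y ^ 2 / X powr (1/2))"
    using power2_div_powr_quarter_le[of C X Y] assms(1) X unfolding T_def by simp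
  finally show "real (card (S K Y)) / real (card (S K (C * X powr (1/4)))) \<le> 216 * (Y ^ 2 / X powr (1/2))"
    unfolding T_def .
qed

end
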